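(* Let $f:(0,1)\to(0,1)$ be of the form $f(p)=1-\sum_{k=1}^\infty c_k(1-p)^k$ with $c_k\ge0$ and $\sum_k c_k=1$, and let $p\in(0,1)$. Algorithm 2 (described below), applied to i.i.d. Bernoulli($p$) inputs, uses a total number $N$ of inputs with $$\mathbb E[N]=\frac{f(p)}{p}\left(1+\frac{2}{p(1-p)}\right),$$ and there exist $A>0$, $\beta<1$ with $\Pr[N>n]\le A\beta^n$ for all $n$ (i.e. the algorithm is fast).
   Context: Let $d_k=c_k/(1-\sum_{j=1}^{k-1}c_j)\in[0,1]$ (if $c_K>0$ and $c_k=0$ for $k>K$, then $d_K=1$ and later $d_k$ are not needed). Write each $d_k$ in binary as $0.b_1b_2b_3\cdots$ with infinitely many fractional digits (so $1=0.111\cdots$). Algorithm 2 uses only the input sequence $X_1,X_2,\dots$ (i.i.d. Bernoulli($p$)), taken in order: set $i=1$. (2) Take one input, call it $X_i$. (3) Generate $V_i$ as follows: set $j=1$; (3.2) keep taking pairs of inputs until the two values in a pair differ, and let $T$ be the first value of that pair; (3.3) if $T=0$, increase $j$ and return to (3.2); otherwise set $V_i$ equal to the $j$-th fractional binary digit of $d_i$. (4) If $V_i=1$ or $X_i=1$, output $Y=X_i$ and stop; otherwise increase $i$ and return to (2). $N$ is the total number of inputs consumed in all steps. *)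

theory Defs
  imports "HOL-Probability.Probability"
begin

text \<open>Coefficients are indexed from 1 as in the paper: c 1, c 2, ... (c 0 is unused).
  d_k = c_k / (1 - sum_{j=1}^{k-1} c_j).\<close>
definition dcoef :: "(nat \<Rightarrow> real) \<Rightarrow> nat \<Rightarrow> real" where
  "dcoef c k = c k / (1 - (\<Sum>j\<in>{1..<k}. c j))"

text \<open>The j-th fractional binary digit (j \<ge> 1) of x in [0,1], using the expansion with
  infinitely many 1 digits when x > 0 (so 1 = 0.111...), and all digits 0 for x = 0.\<close>
definition bin_digit :: "real \<Rightarrow> nat \<Rightarrow> int" where
  "bin_digit x j = (if x \<le> 0 then 0 else (\<lceil>2 ^ j * x\<rceil> - 1) mod 2)"

text \<open>States of Algorithm 2. The last nat component is always the number of inputs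
  consumed so far (i.e. the position of the next input to be read).
  Start i pos: about to take X_i (step 2).
  Gen i j x pos: generating V_i, current digit index j, with X_i = x (step 3.2).\<close>
datatype alg_state = Start nat nat | Gen nat nat bool nat | Halt bool nat

fun alg_step :: "(nat \<Rightarrow> real) \<Rightarrow> (nat \<Rightarrow> bool) \<Rightarrow> alg_state \<Rightarrow> alg_state" where
  "alg_step c \<omega> (Start i pos) = Gen i 1 (\<omega> pos) (Suc pos)"
| "alg_step c \<omega> (Gen i j x pos) =
     (if \<omega> pos = \<omega> (Suc pos) then Gen i j x (pos + 2)
      else if \<not> \<omega> pos then Gen i (Suc j) x (pos + 2)
      else if bin_digit (dcoef c i) j = 1 \<or> x then Halt x (pos + 2)
      else Start (Suc i) (pos + 2))"
| "alg_step c \<omega> (Halt y pos) = Halt y pos"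

fun is_halt :: "alg_state \<Rightarrow> bool" where
  "is_halt (Halt _ _) = True"
| "is_halt _ = False"

fun consumed :: "alg_state \<Rightarrow> nat" where
  "consumed (Start _ pos) = pos"
| "consumed (Gen _ _ _ pos) = pos"
| "consumed (Halt _ pos) = pos"

definition alg_run :: "(nat \<Rightarrow> real) \<Rightarrow> (nat \<Rightarrow> bool) \<Rightarrow> nat \<Rightarrow> alg_state" where
  "alg_run c \<omega> n = (alg_step c \<omega> ^^ n) (Start 1 0)"

definition num_inputs :: "(nat \<Rightarrow> real) \<Rightarrow> (nat \<Rightarrow> bool) \<Rightarrow> enat" where
  "num_inputs c \<omega> =
     (if \<exists>n. is_halt (alg_run c \<omega> n)
      then enat (consumed (alg_run c \<omega> (LEAST n. is_halt (alg_run c \<omega> n))))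
      else \<infinity>)"

text \<open>The i.i.d. Bernoulli(p) input sequence X_1, X_2, ... (stored at positions 0,1,...).\<close>
definition bern_seq :: "real \<Rightarrow> (nat \<Rightarrow> bool) measure" where
  "bern_seq p = PiM UNIV (\<lambda>_. measure_pmf (bernoulli_pmf p))"

end

theory Submission
  imports Defs
begin

text \<open>Algorithm 2 is a Markov chain on the states Start i, Gen i j x and Halt y, and averaging
  over the inputs read by one step gives a linear operator on functions of the state. The
  expected number of inputs still to be read is the solution h of h = cost + (one-step average
  of h): each round reads X_i and then on average 2 / (p (1 - p)) inputs to generate V_i, and
  it is followed by the next round with probability (1 - p) (1 - d_i). These probabilities
  telescope to (1 - p)^k (1 - c_1 - \<dots> - c_k), whose sum is f(p) / p. The tail is geometric
  because from every running state the algorithm halts within three steps with probability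
  at least p (p (1 - p))^2.\<close>

section \<open>Bernoulli input sequences\<close>

lemma nn_integral_PiM_case_nat:
  assumes "prob_space M" and [measurable]: "F \<in> borel_measurable (\<Pi>\<^sub>M i\<in>UNIV. M)"
  shows "(\<integral>\<^sup>+\<omega>. F \<omega> \<partial>(\<Pi>\<^sub>M i\<in>UNIV. M))
       = (\<integral>\<^sup>+x. \<integral>\<^sup>+\<omega>. F (case_nat x \<omega>) \<partial>(\<Pi>\<^sub>M i\<in>UNIV. M) \<partial>M)"
proof -
  interpret prob_space M by fact
  interpret S: sequence_space M ..
  have "(\<integral>\<^sup>+\<omega>. F \<omega> \<partial>S.S) = (\<integral>\<^sup>+X. F ((\<lambda>(s, \<omega>). case_nat s \<omega>) X) \<partial>(M \<Otimes>\<^sub>M S.S))"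
    by (subst S.PiM_iter[symmetric]) (subst nn_integral_distr, measurable)
  also have "\<dots> = (\<integral>\<^sup>+x. \<integral>\<^sup>+\<omega>. F (case_nat x \<omega>) \<partial>S.S \<partial>M)"
  proof -
    have "(\<lambda>X. F (case_prod case_nat X)) \<in> borel_measurable (M \<Otimes>\<^sub>M S.S)"
      by measurable
    from S.nn_integral_fst[OF this] show ?thesis
      by (simp add: split_beta')
  qed
  finally show ?thesis .
qed

lemma space_bern_seq [simp]: "space (bern_seq p) = UNIV"
  unfolding bern_seq_def by (simp add: space_PiM)

lemma prob_space_bern_seq: "prob_space (bern_seq p)"
  unfolding bern_seq_def by (rule prob_space_PiM) (rule prob_space_measure_pmf)

lemma measurable_case_nat_bern_seq: "(\<lambda>\<omega>. case_nat x \<omega>) \<in> bern_seq p \<rightarrow>\<^sub>M bern_seq p"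
  unfolding bern_seq_def by measurable

lemma nn_integral_bern_seq_case_nat:
  assumes "0 \<le> p" "p \<le> 1" and F: "F \<in> borel_measurable (bern_seq p)"
  shows "(\<integral>\<^sup>+\<omega>. F \<omega> \<partial>bern_seq p)
       = ennreal p * (\<integral>\<^sup>+\<omega>. F (case_nat True \<omega>) \<partial>bern_seq p)
         + ennreal (1 - p) * (\<integral>\<^sup>+\<omega>. F (case_nat False \<omega>) \<partial>bern_seq p)"
  using nn_integral_PiM_case_nat[OF prob_space_measure_pmf F[unfolded bern_seq_def]] assms(1,2)
  by (simp add: bern_seq_def nn_integral_measure_pmf nn_integral_count_space_finite UNIV_bool)

instance alg_state :: countable
  by countable_datatype

lemma measurable_bern_seq_component: "(\<lambda>\<omega>. \<omega> k) \<in> bern_seq p \<rightarrow>\<^sub>M count_space UNIV"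
proof -
  have "(\<lambda>\<omega>. \<omega> k) \<in> bern_seq p \<rightarrow>\<^sub>M measure_pmf (bernoulli_pmf p)"
    unfolding bern_seq_def by (rule measurable_component_singleton) simp
  moreover have "bern_seq p \<rightarrow>\<^sub>M measure_pmf (bernoulli_pmf p) = bern_seq p \<rightarrow>\<^sub>M count_space UNIV"
    by (rule measurable_cong_sets) auto
  ultimately show ?thesis by simp
qed

lemma measurable_bern_seq_two_components:
  "(\<lambda>\<omega>. G (\<omega> k) (\<omega> l)) \<in> bern_seq p \<rightarrow>\<^sub>M count_space UNIV"
  by (rule measurable_compose_countable'[where g="\<lambda>\<omega>. \<omega> k" and I=UNIV],
      rule measurable_compose_countable'[where g="\<lambda>\<omega>. \<omega> l" and I=UNIV])
     (auto intro: measurable_bern_seq_component)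

lemma measurable_alg_step: "(\<lambda>\<omega>. alg_step c \<omega> t) \<in> bern_seq p \<rightarrow>\<^sub>M count_space UNIV"
proof -
  let ?pos = "consumed t"
  have "alg_step c \<omega> t = alg_step c (\<lambda>k. if k = ?pos then \<omega> ?pos else \<omega> (Suc ?pos)) t" for \<omega>
    by (cases t) auto
  then show ?thesis
    using measurable_bern_seq_two_components
      [of "\<lambda>a b. alg_step c (\<lambda>k. if k = ?pos then a else b) t" ?pos "Suc ?pos" p]
    by simp
qed

lemma measurable_alg_steps: "(\<lambda>\<omega>. (alg_step c \<omega> ^^ n) s) \<in> bern_seq p \<rightarrow>\<^sub>M count_space UNIV"
proof (induction n)
  case (Suc n)
  have "(\<lambda>\<omega>. alg_step c \<omega> ((alg_step c \<omega> ^^ n) s)) \<in> bern_seq p \<rightarrow>\<^sub>M count_space UNIV"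
    by (rule measurable_compose_countable'[where g="\<lambda>\<omega>. (alg_step c \<omega> ^^ n) s" and I=UNIV])
       (auto intro: measurable_alg_step Suc)
  then show ?case by simp
qed simp

lemma measurable_fun_alg_steps:
  assumes "\<And>t. H t \<in> space N"
  shows "(\<lambda>\<omega>. H ((alg_step c \<omega> ^^ n) s)) \<in> bern_seq p \<rightarrow>\<^sub>M N"
  by (rule measurable_compose_countable'[where g="\<lambda>\<omega>. (alg_step c \<omega> ^^ n) s" and I=UNIV])
     (auto intro!: measurable_const assms measurable_alg_steps)

section \<open>The one-step expectation operator\<close>

fun shift_pos :: "nat \<Rightarrow> alg_state \<Rightarrow> alg_state" where
  "shift_pos k (Start i pos) = Start i (pos + k)"
| "shift_pos k (Gen i j x pos) = Gen i j x (pos + k)"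
| "shift_pos k (Halt y pos) = Halt y (pos + k)"

fun reset_pos :: "alg_state \<Rightarrow> alg_state" where
  "reset_pos (Start i _) = Start i 0"
| "reset_pos (Gen i j x _) = Gen i j x 0"
| "reset_pos (Halt y _) = Halt y 0"

lemma reset_pos_shift_pos [simp]: "reset_pos (shift_pos k s) = reset_pos s"
  by (cases s) auto

lemma reset_pos_id: "consumed s = 0 \<Longrightarrow> reset_pos s = s"
  by (cases s) auto

lemma alg_steps_shift_pos:
  "(alg_step c \<omega> ^^ n) (shift_pos k s) = shift_pos k ((alg_step c (\<lambda>t. \<omega> (t + k)) ^^ n) s)"
proof -
  have "alg_step c \<omega> (shift_pos k s) = shift_pos k (alg_step c (\<lambda>t. \<omega> (t + k)) s)" for s
    by (cases s) auto
  then show ?thesis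
    by (induction n) auto
qed

definition gen_next :: "(nat \<Rightarrow> real) \<Rightarrow> nat \<Rightarrow> nat \<Rightarrow> bool \<Rightarrow> bool \<Rightarrow> bool \<Rightarrow> alg_state" where
  "gen_next c i j x a b =
     (if a = b then Gen i j x 0
      else if \<not> a then Gen i (Suc j) x 0
      else if bin_digit (dcoef c i) j = 1 \<or> x then Halt x 0
      else Start (Suc i) 0)"

lemma consumed_gen_next [simp]: "consumed (gen_next c i j x a b) = 0"
  by (simp add: gen_next_def)

lemma alg_steps_Start:
  "(alg_step c (case_nat x \<omega>) ^^ Suc n) (Start i 0) = shift_pos 1 ((alg_step c \<omega> ^^ n) (Gen i 1 x 0))"
proof -
  have "alg_step c (case_nat x \<omega>) (Start i 0) = shift_pos 1 (Gen i 1 x 0)"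
    by simp
  moreover have "(\<lambda>t. case_nat x \<omega> (t + 1)) = \<omega>"
    by auto
  ultimately show ?thesis
    by (simp only: funpow_Suc_right comp_def alg_steps_shift_pos)
qed

lemma alg_steps_Gen:
  "(alg_step c (case_nat a (case_nat b \<omega>)) ^^ Suc n) (Gen i j x 0)
     = shift_pos 2 ((alg_step c \<omega> ^^ n) (gen_next c i j x a b))"
proof -
  have "alg_step c (case_nat a (case_nat b \<omega>)) (Gen i j x 0) = shift_pos 2 (gen_next c i j x a b)"
    by (auto simp: gen_next_def)
  moreover have "(\<lambda>t. case_nat a (case_nat b \<omega>) (t + 2)) = \<omega>"
    by auto
  ultimately show ?thesis
    by (simp only: funpow_Suc_right comp_def alg_steps_shift_pos)
qed

lemma alg_steps_Halt [simp]: "(alg_step c \<omega> ^^ n) (Halt y pos) = Halt y pos"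
  by (induction n) auto

text \<open>Positions are reset to 0: the inputs read by a step are fresh, so the distribution of the
  next state does not depend on where they are read.\<close>
definition expect_step :: "(nat \<Rightarrow> real) \<Rightarrow> real \<Rightarrow> (alg_state \<Rightarrow> real) \<Rightarrow> alg_state \<Rightarrow> real" where
  "expect_step c p G s = (case s of
      Start i _ \<Rightarrow> p * G (Gen i 1 True 0) + (1 - p) * G (Gen i 1 False 0)
    | Gen i j x _ \<Rightarrow>
        p * (p * G (gen_next c i j x True True) + (1 - p) * G (gen_next c i j x True False))
        + (1 - p) * (p * G (gen_next c i j x False True) + (1 - p) * G (gen_next c i j x False False))
    | Halt y _ \<Rightarrow> G (Halt y 0))"

lemma expect_step_Start [simp]:
  "expect_step c p G (Start i pos) = p * G (Gen i 1 True 0) + (1 - p) * G (Gen i 1 False 0)"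
  by (simp add: expect_step_def)

lemma expect_step_Gen [simp]:
  "expect_step c p G (Gen i j x pos)
     = p * (p * G (gen_next c i j x True True) + (1 - p) * G (gen_next c i j x True False))
       + (1 - p) * (p * G (gen_next c i j x False True) + (1 - p) * G (gen_next c i j x False False))"
  by (simp add: expect_step_def)

lemma expect_step_Halt [simp]: "expect_step c p G (Halt y pos) = G (Halt y 0)"
  by (simp add: expect_step_def)

lemma convex_comb_nonneg:
  fixes p :: real
  shows "0 \<le> p \<Longrightarrow> p \<le> 1 \<Longrightarrow> 0 \<le> a \<Longrightarrow> 0 \<le> b \<Longrightarrow> 0 \<le> p * a + (1 - p) * b"
  by simp

lemma convex_comb_mono:
  fixes p :: real
  shows "0 \<le> p \<Longrightarrow> p \<le> 1 \<Longrightarrow> a \<le> A \<Longrightarrow> b \<le> B \<Longrightarrow> p * a + (1 - p) * b \<le> p * A + (1 - p) * B"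
  by (intro add_mono mult_left_mono) auto

lemma ennreal_convex_comb:
  "0 \<le> p \<Longrightarrow> p \<le> 1 \<Longrightarrow> 0 \<le> a \<Longrightarrow> 0 \<le> b \<Longrightarrow>
   ennreal p * ennreal a + ennreal (1 - p) * ennreal b = ennreal (p * a + (1 - p) * b)"
  by (simp add: ennreal_mult ennreal_plus)

lemma expect_step_nonneg:
  "0 \<le> p \<Longrightarrow> p \<le> 1 \<Longrightarrow> (\<And>t. 0 \<le> G t) \<Longrightarrow> 0 \<le> expect_step c p G s"
  by (cases s) (auto intro!: convex_comb_nonneg)

lemma expect_steps_nonneg:
  "0 \<le> p \<Longrightarrow> p \<le> 1 \<Longrightarrow> (\<And>t. 0 \<le> G t) \<Longrightarrow> 0 \<le> (expect_step c p ^^ n) G s"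
  by (induction n arbitrary: s) (auto intro!: expect_step_nonneg)

lemma nn_integral_alg_steps:
  assumes p: "0 \<le> p" "p \<le> 1" and \<phi>: "\<And>t. 0 \<le> \<phi> t" and s: "consumed s = 0"
  shows "(\<integral>\<^sup>+\<omega>. ennreal (\<phi> (reset_pos ((alg_step c \<omega> ^^ n) s))) \<partial>bern_seq p)
       = ennreal ((expect_step c p ^^ n) \<phi> s)"
  using s
proof (induction n arbitrary: s)
  case 0
  interpret prob_space "bern_seq p"
    by (rule prob_space_bern_seq)
  show ?case
    using reset_pos_id[OF 0] emeasure_space_1 by simp
next
  case (Suc n)
  let ?G = "(expect_step c p ^^ n) \<phi>"
  let ?F = "\<lambda>s \<omega>. ennreal (\<phi> (reset_pos ((alg_step c \<omega> ^^ Suc n) s)))"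
  have G: "0 \<le> ?G t" for t
    using p \<phi> by (rule expect_steps_nonneg)
  have F: "?F s \<in> borel_measurable (bern_seq p)" for s
    by (rule measurable_fun_alg_steps) simp
  have F_case_nat: "(\<lambda>\<omega>. ?F s (case_nat a \<omega>)) \<in> borel_measurable (bern_seq p)" for s a
    by (rule measurable_compose[OF measurable_case_nat_bern_seq F])
  have expect_step_Suc: "(expect_step c p ^^ Suc n) \<phi> s = expect_step c p ?G s"
    by simp
  show ?case
  proof (cases s)
    case (Start i pos)
    with Suc.prems have s: "s = Start i 0" by simp
    have "(\<integral>\<^sup>+\<omega>. ?F s \<omega> \<partial>bern_seq p)
        = ennreal p * ennreal (?G (Gen i 1 True 0)) + ennreal (1 - p) * ennreal (?G (Gen i 1 False 0))"
      by (simp only: nn_integral_bern_seq_case_nat[OF p F] s alg_steps_Start reset_pos_shift_pos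
            Suc.IH consumed.simps)
    then show ?thesis
      by (simp add: ennreal_convex_comb[OF p G G] expect_step_Suc s)
  next
    case (Gen i j x pos)
    with Suc.prems have s: "s = Gen i j x 0" by simp
    let ?E = "\<lambda>a. ennreal p * ennreal (?G (gen_next c i j x a True))
                 + ennreal (1 - p) * ennreal (?G (gen_next c i j x a False))"
    have "(\<integral>\<^sup>+\<omega>. ?F s \<omega> \<partial>bern_seq p) = ennreal p * ?E True + ennreal (1 - p) * ?E False"
      by (simp only: nn_integral_bern_seq_case_nat[OF p F] nn_integral_bern_seq_case_nat[OF p F_case_nat]
            s alg_steps_Gen reset_pos_shift_pos Suc.IH consumed_gen_next)
    then show ?thesis
      by (simp add: ennreal_convex_comb[OF p G G] ennreal_convex_comb[OF p convex_comb_nonneg[OF p G G]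
            convex_comb_nonneg[OF p G G]] expect_step_Suc s)
  next
    case (Halt y pos)
    with Suc.prems have s: "s = Halt y 0" by simp
    then show ?thesis
      using Suc.IH[of s] by (simp add: expect_step_Suc)
  qed
qed

section \<open>Geometric decay of the running probability\<close>

definition bounded_off_halt :: "(alg_state \<Rightarrow> real) \<Rightarrow> real \<Rightarrow> bool" where
  "bounded_off_halt F K \<longleftrightarrow> (\<forall>t. 0 \<le> F t \<and> F t \<le> K) \<and> (\<forall>y. F (Halt y 0) = 0)"

lemma bounded_off_halt_nonneg: "bounded_off_halt F K \<Longrightarrow> 0 \<le> K"
  unfolding bounded_off_halt_def by (meson order_trans)

lemma expect_step_bounded_off_halt:
  assumes p: "0 \<le> p" "p \<le> 1" and F: "bounded_off_halt F K"
  shows "bounded_off_halt (expect_step c p F) K"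
proof -
  have F_le: "F t \<le> K" and F_nonneg: "0 \<le> F t" for t
    using F by (auto simp: bounded_off_halt_def)
  have "expect_step c p F t \<le> K" for t
    using p F_le bounded_off_halt_nonneg[OF F]
    by (cases t) (auto intro!: convex_bound_le)
  then show ?thesis
    using expect_step_nonneg[OF p F_nonneg] F by (auto simp: bounded_off_halt_def)
qed

lemma expect_steps_bounded_off_halt:
  "0 \<le> p \<Longrightarrow> p \<le> 1 \<Longrightarrow> bounded_off_halt F K \<Longrightarrow> bounded_off_halt ((expect_step c p ^^ n) F) K"
  by (induction n) (auto intro: expect_step_bounded_off_halt)

text \<open>From Gen with X_i = 1, the pair (1, 0) halts at once.\<close>
lemma expect_step_Gen_True_le:
  assumes p: "0 \<le> p" "p \<le> 1" and F: "bounded_off_halt F K"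
  shows "expect_step c p F (Gen i j True pos) \<le> (1 - p * (1 - p)) * K"
proof -
  have F_le: "F t \<le> K" and F_nonneg: "0 \<le> F t" and F_Halt: "F (Halt y 0) = 0" for t y
    using F by (auto simp: bounded_off_halt_def)
  have "expect_step c p F (Gen i j True pos) \<le> p * (p * K + (1 - p) * 0) + (1 - p) * (p * K + (1 - p) * K)"
    unfolding expect_step_Gen using p F_le F_Halt by (intro convex_comb_mono) (auto simp: gen_next_def)
  also have "\<dots> = (1 - p * (1 - p)) * K"
    by (simp add: algebra_simps)
  finally show ?thesis .
qed

lemma expect_step_Start_le:
  assumes p: "0 \<le> p" "p \<le> 1" and F: "bounded_off_halt F K"
    and F_Gen_True: "\<And>i j. F (Gen i j True 0) \<le> (1 - p * (1 - p)) * K"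
  shows "expect_step c p F (Start i pos) \<le> (1 - p * (p * (1 - p))) * K"
proof -
  have "expect_step c p F (Start i pos) \<le> p * ((1 - p * (1 - p)) * K) + (1 - p) * K"
    using p F_Gen_True F by (simp add: convex_comb_mono bounded_off_halt_def)
  also have "\<dots> = (1 - p * (p * (1 - p))) * K"
    by (simp add: algebra_simps)
  finally show ?thesis .
qed

text \<open>From Gen, the pair (1, 0) either halts or starts a new round.\<close>
lemma expect_step_Gen_le:
  assumes p: "0 \<le> p" "p \<le> 1" and F: "bounded_off_halt F K"
    and F_Start: "\<And>i. F (Start i 0) \<le> (1 - p * (p * (1 - p))) * K"
  shows "expect_step c p F (Gen i j x pos) \<le> (1 - p * (p * (1 - p))^2) * K"
proof -
  have F_le: "F t \<le> K" and F_Halt: "F (Halt y 0) = 0" for t y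
    using F by (auto simp: bounded_off_halt_def)
  have "0 \<le> (1 - p * (p * (1 - p))) * K"
    using p bounded_off_halt_nonneg[OF F] by (simp add: mult_le_one)
  then have "F (gen_next c i j x True False) \<le> (1 - p * (p * (1 - p))) * K"
    using F_Start F_Halt by (auto simp: gen_next_def)
  then have "expect_step c p F (Gen i j x pos)
      \<le> p * (p * K + (1 - p) * ((1 - p * (p * (1 - p))) * K)) + (1 - p) * (p * K + (1 - p) * K)"
    unfolding expect_step_Gen using p F_le by (intro convex_comb_mono) auto
  also have "\<dots> = (1 - p * (p * (1 - p))^2) * K"
    by (simp add: algebra_simps power2_eq_square)
  finally show ?thesis .
qed

definition decay_rate :: "real \<Rightarrow> real" where
  "decay_rate p = 1 - p * (p * (1 - p))^2"

lemma decay_rate_bounds: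
  assumes "0 < p" "p < 1"
  shows "0 < decay_rate p" "decay_rate p < 1"
proof -
  have "0 < p * (1 - p)" "p * (1 - p) < 1"
    using assms by (auto intro: le_less_trans[OF mult_left_le[of "1 - p" p]])
  then have "0 < (p * (1 - p))^2" "(p * (1 - p))^2 < 1"
    by (auto simp: power_less_one_iff)
  then show "0 < decay_rate p" "decay_rate p < 1"
    using assms mult_strict_mono[of p 1 "(p * (1 - p))^2" 1] by (auto simp: decay_rate_def)
qed

lemma expect_step_cube_contracts:
  assumes p: "0 \<le> p" "p \<le> 1" and F: "bounded_off_halt F K"
  shows "bounded_off_halt ((expect_step c p ^^ 3) F) (decay_rate p * K)"
proof -
  let ?P = "expect_step c p"
  have F1: "bounded_off_halt (?P F) K" and F2: "bounded_off_halt (?P (?P F)) K"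
    using p F by (auto intro: expect_step_bounded_off_halt)
  have Start2: "?P (?P F) (Start i 0) \<le> (1 - p * (p * (1 - p))) * K" for i
    using p F1 by (rule expect_step_Start_le) (rule expect_step_Gen_True_le[OF p F])
  have Start3: "?P (?P (?P F)) (Start i pos) \<le> (1 - p * (p * (1 - p))) * K" for i pos
    using p F2 by (rule expect_step_Start_le) (rule expect_step_Gen_True_le[OF p F1])
  have Gen3: "?P (?P (?P F)) (Gen i j x pos) \<le> decay_rate p * K" for i j x pos
    unfolding decay_rate_def using p F2 Start2 by (rule expect_step_Gen_le)
  have "0 \<le> p * (1 - p)" "p * (1 - p) \<le> 1"
    using p by (auto simp: mult_le_one)
  then have "(p * (1 - p))^2 \<le> p * (1 - p)"
    by (simp add: power2_eq_square mult_left_le)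
  then have "p * (p * (1 - p))^2 \<le> p * (p * (1 - p))"
    using p by (intro mult_left_mono)
  then have "(1 - p * (p * (1 - p))) * K \<le> decay_rate p * K"
    using bounded_off_halt_nonneg[OF F] unfolding decay_rate_def by (intro mult_right_mono) auto
  with Start3 have Start3': "?P (?P (?P F)) (Start i pos) \<le> decay_rate p * K" for i pos
    by (meson order_trans)
  have "0 \<le> decay_rate p * K"
    using p bounded_off_halt_nonneg[OF F]
    by (auto simp: decay_rate_def power2_eq_square mult_le_one)
  then have "?P (?P (?P F)) t \<le> decay_rate p * K" for t
    using F Start3' Gen3 by (cases t) (auto simp: bounded_off_halt_def)
  moreover have "bounded_off_halt (?P (?P (?P F))) K"
    using p F2 by (rule expect_step_bounded_off_halt)
  ultimately show ?thesis
    by (auto simp: bounded_off_halt_def numeral_3_eq_3)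
qed

lemma expect_steps_decay:
  assumes p: "0 \<le> p" "p \<le> 1" and F: "bounded_off_halt F K"
  shows "bounded_off_halt ((expect_step c p ^^ n) F) (decay_rate p ^ (n div 3) * K)"
proof -
  have thirds: "bounded_off_halt ((expect_step c p ^^ (3 * k)) F) (decay_rate p ^ k * K)" for k
  proof (induction k)
    case (Suc k)
    have "(expect_step c p ^^ (3 * Suc k)) F = (expect_step c p ^^ 3) ((expect_step c p ^^ (3 * k)) F)"
      by (simp add: funpow_add)
    then show ?case
      using expect_step_cube_contracts[OF p Suc] by (simp add: algebra_simps)
  qed (use F in simp)
  have "(expect_step c p ^^ n) F = (expect_step c p ^^ (n mod 3)) ((expect_step c p ^^ (3 * (n div 3))) F)"
    by (metis funpow_add comp_apply div_mult_mod_eq mult.commute add.commute)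
  then show ?thesis
    using expect_steps_bounded_off_halt[OF p thirds] by simp
qed

lemma power_div_le_geometric:
  fixes g :: real
  assumes g: "0 < g" "g < 1" and d: "0 < d"
  shows "\<exists>A \<beta>. A > 0 \<and> 0 < \<beta> \<and> \<beta> < 1 \<and> (\<forall>n. g ^ (n div d) \<le> A * \<beta> ^ n)"
proof -
  define \<beta> where "\<beta> = root d g"
  have \<beta>: "0 < \<beta>" "\<beta> < 1" "\<beta> ^ d = g"
    using g d unfolding \<beta>_def by (auto simp: real_root_lt_1_iff)
  have "g ^ (n div d) \<le> 1 / \<beta> ^ (d - 1) * \<beta> ^ n" for n
  proof -
    have "n = d * (n div d) + n mod d" "n mod d < d"
      using d by simp_all
    then have "n \<le> d * (n div d) + (d - 1)"
      by linarith
    then have "\<beta> ^ (d * (n div d) + (d - 1)) \<le> \<beta> ^ n"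
      using \<beta> by (intro power_decreasing) auto
    then have "g ^ (n div d) * \<beta> ^ (d - 1) \<le> \<beta> ^ n"
      by (simp add: power_add power_mult \<beta>(3))
    then show ?thesis
      using \<beta> by (simp add: field_simps)
  qed
  then show ?thesis
    using \<beta> by (intro exI[of _ "1 / \<beta> ^ (d - 1)"] exI[of _ \<beta>]) auto
qed

section \<open>Binary digits\<close>

lemma bin_digit_cases: "bin_digit x j = 0 \<or> bin_digit x j = 1"
proof -
  have "0 \<le> bin_digit x j" "bin_digit x j < 2"
    unfolding bin_digit_def by auto
  then show ?thesis
    by auto
qed

lemma bin_digit_bounds: "0 \<le> bin_digit x j" "bin_digit x j \<le> 1"
  using bin_digit_cases[of x j] by auto

text \<open>The probability that the coin-driven digit index, once it has reached j, stops at a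
  digit 1: it stops at digit j + m with probability 2^-(m+1).\<close>
definition binary_tail :: "real \<Rightarrow> nat \<Rightarrow> real" where
  "binary_tail x j = (\<Sum>m. real_of_int (bin_digit x (j + m)) / 2 ^ Suc m)"

lemma summable_binary_tail: "summable (\<lambda>m. real_of_int (bin_digit x (j + m)) / 2 ^ Suc m)"
proof (rule summable_comparison_test[OF _ power_half_series[THEN sums_summable]])
  show "\<exists>N. \<forall>n\<ge>N. norm (real_of_int (bin_digit x (j + n)) / 2 ^ Suc n) \<le> (1 / 2) ^ Suc n"
    using bin_digit_bounds[of x] by (auto simp: power_divide intro!: divide_right_mono)
qed

lemma binary_tail_bounds: "0 \<le> binary_tail x j" "binary_tail x j \<le> 1"
proof -
  note digit = bin_digit_bounds[of x]
  show "0 \<le> binary_tail x j"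
    unfolding binary_tail_def by (rule suminf_nonneg[OF summable_binary_tail]) (simp add: digit)
  have "binary_tail x j \<le> (\<Sum>m. (1 / 2 :: real) ^ Suc m)"
    unfolding binary_tail_def
    by (rule suminf_le[OF _ summable_binary_tail power_half_series[THEN sums_summable]])
       (auto simp: power_divide digit intro!: divide_right_mono)
  then show "binary_tail x j \<le> 1"
    using power_half_series[THEN sums_unique] by simp
qed

lemma binary_tail_Suc:
  "binary_tail x j = real_of_int (bin_digit x j) / 2 + binary_tail x (Suc j) / 2"
proof -
  have "(\<Sum>m. real_of_int (bin_digit x (j + Suc m)) / 2 ^ Suc (Suc m))
      = binary_tail x j - real_of_int (bin_digit x j) / 2"
    using suminf_split_head[OF summable_binary_tail[of x j]] unfolding binary_tail_def by simp
  moreover have "(\<Sum>m. real_of_int (bin_digit x (j + Suc m)) / 2 ^ Suc (Suc m)) = binary_tail x (Suc j) / 2"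
    using suminf_divide[OF summable_binary_tail[of x "Suc j"], of 2]
    unfolding binary_tail_def by (simp add: field_simps)
  ultimately show ?thesis
    by simp
qed

lemma ceiling_double_cases: "\<lceil>2 * y\<rceil> = 2 * \<lceil>y\<rceil> - 1 \<or> \<lceil>2 * y\<rceil> = 2 * \<lceil>y\<rceil>" for y :: real
proof -
  have y: "real_of_int \<lceil>y\<rceil> - 1 < y" "y \<le> real_of_int \<lceil>y\<rceil>"
    by linarith+
  then have "\<lceil>2 * y\<rceil> \<le> 2 * \<lceil>y\<rceil>"
    by (simp add: ceiling_le_iff)
  moreover have "2 * \<lceil>y\<rceil> - 2 < \<lceil>2 * y\<rceil>"
    using y by (simp add: less_ceiling_iff)
  ultimately show ?thesis
    by linarith
qed

text \<open>With g j = \<lceil>2^j x\<rceil> - 1, the digits satisfy g (j + 1) = 2 g j + digit (j + 1), and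
  the partial sums g j / 2^j approach x from below.\<close>
lemma binary_tail_one:
  fixes x :: real
  assumes x: "0 \<le> x" "x \<le> 1"
  shows "binary_tail x 1 = x"
proof (cases "x = 0")
  case True
  then show ?thesis
    by (simp add: binary_tail_def bin_digit_def)
next
  case False
  then have x_pos: "0 < x"
    using x by simp
  define g where "g j = \<lceil>2 ^ j * x\<rceil> - 1" for j :: nat
  have g_Suc: "g (Suc j) = 2 * g j + bin_digit x (Suc j)" for j
  proof -
    have "g (Suc j) = 2 * g j \<or> g (Suc j) = 2 * g j + 1"
      using ceiling_double_cases[of "2 ^ j * x"] unfolding g_def by (auto simp: mult.assoc)
    moreover have "bin_digit x (Suc j) = g (Suc j) mod 2"
      using x_pos unfolding bin_digit_def g_def by simp
    ultimately show ?thesis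
      by auto
  qed
  have partial_sums: "(\<Sum>m<n. real_of_int (bin_digit x (Suc m)) / 2 ^ Suc m) = real_of_int (g n) / 2 ^ n" for n
  proof (induction n)
    case 0
    then show ?case
      using x_pos x by (simp add: g_def ceiling_eq_iff)
  next
    case (Suc n)
    then show ?case
      by (simp add: g_Suc field_simps)
  qed
  have lower: "x - 1 / 2 ^ n \<le> real_of_int (g n) / 2 ^ n"
    and upper: "real_of_int (g n) / 2 ^ n \<le> x" for n :: nat
  proof -
    have "2 ^ n * x - 1 \<le> real_of_int (g n)" "real_of_int (g n) \<le> 2 ^ n * x"
      unfolding g_def by linarith+
    then show "real_of_int (g n) / 2 ^ n \<le> x"
      by (simp add: divide_le_eq mult.commute)
    have "x - 1 / 2 ^ n = (2 ^ n * x - 1) / 2 ^ n"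
      by (simp add: field_simps)
    also have "\<dots> \<le> real_of_int (g n) / 2 ^ n"
      using \<open>2 ^ n * x - 1 \<le> real_of_int (g n)\<close> by (rule divide_right_mono) simp
    finally show "x - 1 / 2 ^ n \<le> real_of_int (g n) / 2 ^ n" .
  qed
  have lim_lower: "(\<lambda>n. x - 1 / 2 ^ n) \<longlonglongrightarrow> x"
    using tendsto_diff[OF tendsto_const LIMSEQ_divide_realpow_zero[of 2 1]] by simp
  have "(\<lambda>n. real_of_int (g n) / 2 ^ n) \<longlonglongrightarrow> x"
    by (rule tendsto_sandwich[OF _ _ lim_lower tendsto_const]) (auto intro!: always_eventually lower upper)
  then have "(\<lambda>m. real_of_int (bin_digit x (Suc m)) / 2 ^ Suc m) sums x"
    unfolding sums_def partial_sums .
  then show ?thesis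
    unfolding binary_tail_def by (simp add: sums_iff)
qed

section \<open>The expected number of inputs\<close>

text \<open>The probability that round i is followed by round i + 1, i.e. that X_i = 0 and V_i = 0.\<close>
definition pass_prob :: "(nat \<Rightarrow> real) \<Rightarrow> real \<Rightarrow> nat \<Rightarrow> real" where
  "pass_prob c p i = (1 - p) * (1 - binary_tail (dcoef c i) 1)"

definition expected_rounds :: "(nat \<Rightarrow> real) \<Rightarrow> real \<Rightarrow> nat \<Rightarrow> real" where
  "expected_rounds c p i = (\<Sum>k. \<Prod>m<k. pass_prob c p (i + m))"

text \<open>The expected number of inputs still to be read from state s. Generating V_i costs
  2 / (p (1 - p)) inputs on average: it reads pairs until one equals (1, 0).\<close>
definition expected_cost :: "(nat \<Rightarrow> real) \<Rightarrow> real \<Rightarrow> alg_state \<Rightarrow> real" where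
  "expected_cost c p s = (case s of
      Start i _ \<Rightarrow> (1 + 2 / (p * (1 - p))) * expected_rounds c p i
    | Gen i j x _ \<Rightarrow> 2 / (p * (1 - p))
        + (if x then 0 else (1 - binary_tail (dcoef c i) j) * ((1 + 2 / (p * (1 - p))) * expected_rounds c p (Suc i)))
    | Halt _ _ \<Rightarrow> 0)"

fun step_cost :: "alg_state \<Rightarrow> nat" where
  "step_cost (Start _ _) = 1"
| "step_cost (Gen _ _ _ _) = 2"
| "step_cost (Halt _ _) = 0"

context
  fixes p :: real
  assumes p: "0 < p" "p < 1"
begin

lemma pass_prob_bounds: "0 \<le> pass_prob c p i" "pass_prob c p i \<le> 1 - p"
  using binary_tail_bounds[of "dcoef c i" 1] p unfolding pass_prob_def
  by (auto simp: mult_left_le)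

lemma prod_pass_prob_bounds: "0 \<le> (\<Prod>m<k. pass_prob c p (i + m))" "(\<Prod>m<k. pass_prob c p (i + m)) \<le> (1 - p) ^ k"
proof -
  show "0 \<le> (\<Prod>m<k. pass_prob c p (i + m))"
    by (rule prod_nonneg) (simp add: pass_prob_bounds)
  have "(\<Prod>m<k. pass_prob c p (i + m)) \<le> (\<Prod>m<k. 1 - p)"
    by (rule prod_mono) (simp add: pass_prob_bounds)
  then show "(\<Prod>m<k. pass_prob c p (i + m)) \<le> (1 - p) ^ k"
    by simp
qed

lemma summable_expected_rounds: "summable (\<lambda>k. \<Prod>m<k. pass_prob c p (i + m))"
  by (rule summable_comparison_test[OF _ summable_geometric[of "1 - p"]])
     (use p prod_pass_prob_bounds in auto)

lemma expected_rounds_bounds: "0 \<le> expected_rounds c p i" "expected_rounds c p i \<le> 1 / p"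
proof -
  show "0 \<le> expected_rounds c p i"
    unfolding expected_rounds_def
    by (rule suminf_nonneg[OF summable_expected_rounds]) (simp add: prod_pass_prob_bounds)
  have "expected_rounds c p i \<le> (\<Sum>k. (1 - p) ^ k)"
    unfolding expected_rounds_def
    by (rule suminf_le[OF _ summable_expected_rounds summable_geometric]) (use p prod_pass_prob_bounds in auto)
  also have "\<dots> = 1 / p"
    using suminf_geometric[of "1 - p"] p by simp
  finally show "expected_rounds c p i \<le> 1 / p" .
qed

lemma expected_rounds_Suc: "expected_rounds c p i = 1 + pass_prob c p i * expected_rounds c p (Suc i)"
proof -
  have "(\<Prod>m<Suc k. pass_prob c p (i + m)) = pass_prob c p i * (\<Prod>m<k. pass_prob c p (Suc i + m))" for k
    by (simp only: prod.lessThan_Suc_shift) simp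
  then have "(\<Sum>k. \<Prod>m<Suc k. pass_prob c p (i + m)) = pass_prob c p i * expected_rounds c p (Suc i)"
    unfolding expected_rounds_def using suminf_mult[OF summable_expected_rounds[of c "Suc i"]] by simp
  then show ?thesis
    using suminf_split_head[OF summable_expected_rounds[of c i]] unfolding expected_rounds_def by simp
qed

lemma expected_cost_Gen_unfold:
  "expected_cost c p (Gen i j x pos) = 2 + expect_step c p (expected_cost c p) (Gen i j x pos)"
proof -
  define a where "a = 2 / (p * (1 - p))"
  define U where "U = (1 + a) * expected_rounds c p (Suc i)"
  define \<tau> where "\<tau> j = binary_tail (dcoef c i) j" for j
  define d where "d = real_of_int (bin_digit (dcoef c i) j)"
  have a: "p * (1 - p) * a = 2"
    using p by (simp add: a_def)
  have cost_Gen: "expected_cost c p (Gen i k x pos') = a + (if x then 0 else (1 - \<tau> k) * U)" for k pos'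
    by (simp add: expected_cost_def a_def U_def \<tau>_def)
  have \<tau>_Suc: "\<tau> (Suc j) = 2 * \<tau> j - d"
    using binary_tail_Suc[of "dcoef c i" j] by (simp add: \<tau>_def d_def)
  have cost_exit: "expected_cost c p (gen_next c i j x True False) = (if x then 0 else (1 - d) * U)"
    using bin_digit_cases[of "dcoef c i" j]
    by (auto simp: gen_next_def expected_cost_def d_def U_def a_def)
  have "expect_step c p (expected_cost c p) (Gen i j x pos)
      = p * (p * (a + (if x then 0 else (1 - \<tau> j) * U)) + (1 - p) * (if x then 0 else (1 - d) * U))
        + (1 - p) * (p * (a + (if x then 0 else (1 - \<tau> (Suc j)) * U))
                     + (1 - p) * (a + (if x then 0 else (1 - \<tau> j) * U)))"
    using cost_exit by (simp add: gen_next_def cost_Gen)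
  also have "\<dots> = a - p * (1 - p) * a + (if x then 0 else (1 - \<tau> j) * U)"
    by (simp add: \<tau>_Suc algebra_simps)
  finally show ?thesis
    using a by (simp add: cost_Gen)
qed

lemma expected_cost_unfold: "expected_cost c p s = real (step_cost s) + expect_step c p (expected_cost c p) s"
proof (cases s)
  case (Start i pos)
  define a where "a = 2 / (p * (1 - p))"
  define S' where "S' = expected_rounds c p (Suc i)"
  define \<tau> where "\<tau> = binary_tail (dcoef c i) 1"
  have "expected_cost c p (Start i pos) = (1 + a) * expected_rounds c p i"
    by (simp add: expected_cost_def a_def)
  moreover have "expect_step c p (expected_cost c p) (Start i pos) = p * a + (1 - p) * (a + (1 - \<tau>) * ((1 + a) * S'))"
    by (simp add: expected_cost_def a_def S'_def \<tau>_def)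
  moreover have "expected_rounds c p i = 1 + (1 - p) * (1 - \<tau>) * S'"
    using expected_rounds_Suc[of c i] by (simp add: pass_prob_def S'_def \<tau>_def)
  ultimately show ?thesis
    using Start by (simp add: algebra_simps)
qed (simp_all add: expected_cost_Gen_unfold, simp add: expected_cost_def)

lemma expected_cost_bounded_off_halt:
  "bounded_off_halt (expected_cost c p) (2 / (p * (1 - p)) + (1 + 2 / (p * (1 - p))) / p)"
proof -
  define a where "a = 2 / (p * (1 - p))"
  have a: "0 \<le> a"
    using p by (simp add: a_def)
  have rounds: "0 \<le> (1 + a) * expected_rounds c p i" "(1 + a) * expected_rounds c p i \<le> (1 + a) / p" for i
    using expected_rounds_bounds[of c i] a mult_left_mono[of _ "1 / p" "1 + a"] by auto
  have "0 \<le> expected_cost c p t \<and> expected_cost c p t \<le> a + (1 + a) / p" for t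
  proof (cases t)
    case (Gen i j x pos)
    have "0 \<le> 1 - binary_tail (dcoef c i) j" "1 - binary_tail (dcoef c i) j \<le> 1"
      using binary_tail_bounds[of "dcoef c i" j] by auto
    then have "0 \<le> (1 - binary_tail (dcoef c i) j) * ((1 + a) * expected_rounds c p (Suc i))"
      "(1 - binary_tail (dcoef c i) j) * ((1 + a) * expected_rounds c p (Suc i)) \<le> 1 * ((1 + a) / p)"
      using rounds[of "Suc i"] by (auto intro: order_trans[OF mult_left_le_one_le])
    then show ?thesis
      using a Gen by (simp add: expected_cost_def a_def[symmetric])
  next
    case (Start i pos)
    then show ?thesis
      using rounds[of i] a by (simp add: expected_cost_def a_def[symmetric])
  next
    case (Halt y pos)
    then show ?thesis
      using rounds[of 0] a by (simp add: expected_cost_def)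
  qed
  then show ?thesis
    by (simp add: bounded_off_halt_def expected_cost_def a_def)
qed

end

lemma expect_step_add: "expect_step c p (\<lambda>t. F t + G t) = (\<lambda>t. expect_step c p F t + expect_step c p G t)"
proof
  show "expect_step c p (\<lambda>t. F t + G t) s = expect_step c p F s + expect_step c p G s" for s
    by (cases s) (simp_all add: algebra_simps)
qed

lemma expect_steps_add:
  "(expect_step c p ^^ n) (\<lambda>t. F t + G t) = (\<lambda>t. (expect_step c p ^^ n) F t + (expect_step c p ^^ n) G t)"
  by (induction n) (simp_all add: expect_step_add)

context
  fixes p :: real
  assumes p: "0 < p" "p < 1"
begin

lemma expected_cost_telescope:
  "expected_cost c p s
     = (\<Sum>k<n. (expect_step c p ^^ k) (\<lambda>t. real (step_cost t)) s) + (expect_step c p ^^ n) (expected_cost c p) s"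
proof (induction n)
  case (Suc n)
  have "(expect_step c p ^^ n) (expected_cost c p) s
      = (expect_step c p ^^ n) (\<lambda>t. real (step_cost t) + expect_step c p (expected_cost c p) t) s"
    by (subst expected_cost_unfold[OF p, abs_def]) (rule refl)
  also have "\<dots> = (expect_step c p ^^ n) (\<lambda>t. real (step_cost t)) s + (expect_step c p ^^ Suc n) (expected_cost c p) s"
    by (simp only: expect_steps_add funpow_Suc_right comp_apply)
  finally show ?case
    using Suc by simp
qed simp

lemma expected_cost_sums: "(\<lambda>k. (expect_step c p ^^ k) (\<lambda>t. real (step_cost t)) s) sums expected_cost c p s"
proof -
  define K where "K = 2 / (p * (1 - p)) + (1 + 2 / (p * (1 - p))) / p"
  obtain A \<beta> where A: "A > 0" and \<beta>: "0 < \<beta>" "\<beta> < 1" and decay: "\<And>n. decay_rate p ^ (n div 3) \<le> A * \<beta> ^ n"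
    using power_div_le_geometric[OF decay_rate_bounds[OF p], of 3] by auto
  have bounded: "bounded_off_halt (expected_cost c p) K"
    unfolding K_def by (rule expected_cost_bounded_off_halt[OF p])
  have remainder: "0 \<le> (expect_step c p ^^ n) (expected_cost c p) s"
    "(expect_step c p ^^ n) (expected_cost c p) s \<le> A * K * \<beta> ^ n" for n
  proof -
    have "bounded_off_halt ((expect_step c p ^^ n) (expected_cost c p)) (decay_rate p ^ (n div 3) * K)"
      using p bounded by (intro expect_steps_decay) auto
    then have "0 \<le> (expect_step c p ^^ n) (expected_cost c p) s"
      "(expect_step c p ^^ n) (expected_cost c p) s \<le> decay_rate p ^ (n div 3) * K"
      unfolding bounded_off_halt_def by auto
    moreover have "decay_rate p ^ (n div 3) * K \<le> A * K * \<beta> ^ n"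
      using mult_right_mono[OF decay bounded_off_halt_nonneg[OF bounded]] by (simp add: ac_simps)
    ultimately show "0 \<le> (expect_step c p ^^ n) (expected_cost c p) s"
      "(expect_step c p ^^ n) (expected_cost c p) s \<le> A * K * \<beta> ^ n"
      by auto
  qed
  have geometric: "(\<lambda>n. A * K * \<beta> ^ n) \<longlonglongrightarrow> 0"
    using tendsto_mult_right_zero[OF LIMSEQ_power_zero[of \<beta>]] \<beta> by simp
  have "(\<lambda>n. (expect_step c p ^^ n) (expected_cost c p) s) \<longlonglongrightarrow> 0"
    by (rule tendsto_sandwich[OF _ _ tendsto_const geometric]) (auto intro!: always_eventually remainder)
  then have "(\<lambda>n. expected_cost c p s - (expect_step c p ^^ n) (expected_cost c p) s) \<longlonglongrightarrow> expected_cost c p s - 0"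
    by (intro tendsto_diff tendsto_const)
  moreover have "expected_cost c p s - (expect_step c p ^^ n) (expected_cost c p) s
      = (\<Sum>k<n. (expect_step c p ^^ k) (\<lambda>t. real (step_cost t)) s)" for n
    using expected_cost_telescope[of c s n] by linarith
  ultimately show ?thesis
    unfolding sums_def by simp
qed

end

section \<open>Expectation and tail of the number of inputs\<close>

lemma consumed_alg_steps:
  "consumed ((alg_step c \<omega> ^^ n) s) = consumed s + (\<Sum>k<n. step_cost ((alg_step c \<omega> ^^ k) s))"
proof -
  have "consumed (alg_step c \<omega> t) = consumed t + step_cost t" for t
    by (cases t) auto
  then show ?thesis
    by (induction n) auto
qed

lemma step_cost_bounds: "\<not> is_halt t \<Longrightarrow> 1 \<le> step_cost t" "step_cost t \<le> 2"
  by (cases t; simp)+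

lemma step_cost_reset_pos [simp]: "step_cost (reset_pos t) = step_cost t"
  by (cases t) auto

lemma is_halt_reset_pos [simp]: "is_halt (reset_pos t) = is_halt t"
  by (cases t) auto

lemma alg_run_halted:
  assumes "is_halt (alg_run c \<omega> n)" "n \<le> m"
  shows "alg_run c \<omega> m = alg_run c \<omega> n"
proof -
  obtain y pos where "alg_run c \<omega> n = Halt y pos"
    using assms(1) by (cases "alg_run c \<omega> n") auto
  moreover have "alg_run c \<omega> m = (alg_step c \<omega> ^^ (m - n)) (alg_run c \<omega> n)"
    using assms(2) unfolding alg_run_def by (metis funpow_add comp_apply le_add_diff_inverse2)
  ultimately show ?thesis
    by simp
qed

lemma consumed_alg_run: "consumed (alg_run c \<omega> n) = (\<Sum>k<n. step_cost (alg_run c \<omega> k))"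
  unfolding alg_run_def consumed_alg_steps by simp

lemma consumed_alg_run_mono: "n \<le> m \<Longrightarrow> consumed (alg_run c \<omega> n) \<le> consumed (alg_run c \<omega> m)"
  unfolding consumed_alg_run by (auto intro!: sum_mono2)

lemma consumed_alg_run_le: "consumed (alg_run c \<omega> n) \<le> 2 * n"
  using sum_mono[of "{..<n}" "\<lambda>k. step_cost (alg_run c \<omega> k)" "\<lambda>_. 2"]
  unfolding consumed_alg_run by (simp add: step_cost_bounds)

lemma num_inputs_halted:
  assumes "is_halt (alg_run c \<omega> n)"
  shows "num_inputs c \<omega> = enat (consumed (alg_run c \<omega> n))"
proof -
  define L where "L = (LEAST n. is_halt (alg_run c \<omega> n))"
  have "is_halt (alg_run c \<omega> L)" "L \<le> n"
    unfolding L_def using assms by (rule LeastI, rule Least_le)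
  then have "alg_run c \<omega> n = alg_run c \<omega> L"
    by (rule alg_run_halted)
  then show ?thesis
    using assms unfolding num_inputs_def L_def[symmetric] by auto
qed

lemma num_inputs_eq_SUP: "ennreal_of_enat (num_inputs c \<omega>) = (SUP n. of_nat (consumed (alg_run c \<omega> n)))"
proof (cases "\<exists>n. is_halt (alg_run c \<omega> n)")
  case True
  then obtain L where L: "is_halt (alg_run c \<omega> L)"
    by blast
  have "(SUP n. (of_nat (consumed (alg_run c \<omega> n)) :: ennreal)) = of_nat (consumed (alg_run c \<omega> L))"
  proof (rule antisym[OF SUP_least SUP_upper])
    show "(of_nat (consumed (alg_run c \<omega> n)) :: ennreal) \<le> of_nat (consumed (alg_run c \<omega> L))" for n
      using consumed_alg_run_mono[of n L] alg_run_halted[OF L, of n] by (cases "n \<le> L") auto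
  qed simp
  then show ?thesis
    using num_inputs_halted[OF L] by simp
next
  case False
  have consumed_ge: "n \<le> consumed (alg_run c \<omega> n)" for n
  proof -
    have "(\<Sum>k<n. 1) \<le> (\<Sum>k<n. step_cost (alg_run c \<omega> k))"
      using False by (intro sum_mono step_cost_bounds(1)) auto
    then show ?thesis
      by (simp add: consumed_alg_run)
  qed
  have "(SUP n. (of_nat (consumed (alg_run c \<omega> n)) :: ennreal)) = \<top>"
    unfolding SUP_eq_top_iff
  proof (intro allI impI)
    fix x :: ennreal
    assume "x < \<top>"
    then obtain n where "x < of_nat n"
      using ennreal_Ex_less_of_nat by blast
    also have "(of_nat n :: ennreal) \<le> of_nat (consumed (alg_run c \<omega> n))"
      using consumed_ge[of n] by simp
    finally show "\<exists>n\<in>UNIV. x < of_nat (consumed (alg_run c \<omega> n))"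
      by blast
  qed
  moreover have "ennreal_of_enat (num_inputs c \<omega>) = \<top>"
    using False by (simp add: num_inputs_def)
  ultimately show ?thesis
    by (simp only:)
qed

lemma sets_running: "{\<omega>. \<not> is_halt (alg_run c \<omega> m)} \<in> sets (bern_seq p)"
  using measurable_sets[OF measurable_alg_steps[where c=c and n=m and s="Start 1 0" and p=p],
      of "{t. \<not> is_halt t}"]
  by (simp add: alg_run_def vimage_def)

context
  fixes p :: real
  assumes p: "0 < p" "p < 1"
begin

lemma nn_integral_consumed_alg_run:
  "(\<integral>\<^sup>+\<omega>. of_nat (consumed (alg_run c \<omega> n)) \<partial>bern_seq p)
     = ennreal (\<Sum>k<n. (expect_step c p ^^ k) (\<lambda>t. real (step_cost t)) (Start 1 0))"
proof -
  have "(\<integral>\<^sup>+\<omega>. of_nat (consumed (alg_run c \<omega> n)) \<partial>bern_seq p)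
      = (\<integral>\<^sup>+\<omega>. (\<Sum>k<n. ennreal (real (step_cost (reset_pos ((alg_step c \<omega> ^^ k) (Start 1 0)))))) \<partial>bern_seq p)"
    unfolding consumed_alg_run of_nat_sum by (simp add: alg_run_def ennreal_of_nat_eq_real_of_nat)
  also have "\<dots> = (\<Sum>k<n. \<integral>\<^sup>+\<omega>. ennreal (real (step_cost (reset_pos ((alg_step c \<omega> ^^ k) (Start 1 0))))) \<partial>bern_seq p)"
    by (rule nn_integral_sum) (rule measurable_fun_alg_steps, simp)
  also have "\<dots> = (\<Sum>k<n. ennreal ((expect_step c p ^^ k) (\<lambda>t. real (step_cost t)) (Start 1 0)))"
    using p by (intro sum.cong refl nn_integral_alg_steps) auto
  also have "\<dots> = ennreal (\<Sum>k<n. (expect_step c p ^^ k) (\<lambda>t. real (step_cost t)) (Start 1 0))"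
    using p by (intro sum_ennreal expect_steps_nonneg) auto
  finally show ?thesis .
qed

lemma nn_integral_num_inputs:
  "(\<integral>\<^sup>+\<omega>. ennreal_of_enat (num_inputs c \<omega>) \<partial>bern_seq p) = ennreal (expected_cost c p (Start 1 0))"
proof -
  let ?partial = "\<lambda>n. \<Sum>k<n. (expect_step c p ^^ k) (\<lambda>t. real (step_cost t)) (Start 1 0)"
  have "(\<integral>\<^sup>+\<omega>. ennreal_of_enat (num_inputs c \<omega>) \<partial>bern_seq p)
      = (SUP n. \<integral>\<^sup>+\<omega>. of_nat (consumed (alg_run c \<omega> n)) \<partial>bern_seq p)"
    unfolding num_inputs_eq_SUP
  proof (rule nn_integral_monotone_convergence_SUP)
    show "incseq (\<lambda>n \<omega>. (of_nat (consumed (alg_run c \<omega> n)) :: ennreal))"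
      by (auto simp: incseq_def le_fun_def intro: consumed_alg_run_mono)
    show "(\<lambda>\<omega>. (of_nat (consumed (alg_run c \<omega> n)) :: ennreal)) \<in> borel_measurable (bern_seq p)" for n
      unfolding alg_run_def by (rule measurable_fun_alg_steps) simp
  qed
  also have "\<dots> = (SUP n. ennreal (?partial n))"
    by (simp only: nn_integral_consumed_alg_run)
  also have "\<dots> = ennreal (expected_cost c p (Start 1 0))"
  proof (rule LIMSEQ_unique)
    have "0 \<le> (expect_step c p ^^ k) (\<lambda>t. real (step_cost t)) (Start 1 0)" for k
      using p by (intro expect_steps_nonneg) auto
    then show "(\<lambda>n. ennreal (?partial n)) \<longlonglongrightarrow> (SUP n. ennreal (?partial n))"
      by (intro LIMSEQ_SUP) (auto simp: incseq_def intro!: ennreal_leI sum_mono2)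
    show "(\<lambda>n. ennreal (?partial n)) \<longlonglongrightarrow> ennreal (expected_cost c p (Start 1 0))"
      using expected_cost_sums[OF p] unfolding sums_def by (rule tendsto_ennrealI)
  qed
  finally show ?thesis .
qed

lemma num_inputs_gt_imp_running: "num_inputs c \<omega> > enat n \<Longrightarrow> \<not> is_halt (alg_run c \<omega> (n div 2))"
  using num_inputs_halted consumed_alg_run_le[of c \<omega> "n div 2"] by fastforce

lemma prob_running:
  "measure (bern_seq p) {\<omega>. \<not> is_halt (alg_run c \<omega> m)} \<le> decay_rate p ^ (m div 3)"
proof -
  let ?running = "\<lambda>t. if is_halt t then 0 else (1 :: real)"
  have "emeasure (bern_seq p) {\<omega>. \<not> is_halt (alg_run c \<omega> m)}
      = (\<integral>\<^sup>+\<omega>. ennreal (?running (reset_pos ((alg_step c \<omega> ^^ m) (Start 1 0)))) \<partial>bern_seq p)"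
    by (subst nn_integral_indicator[OF sets_running, symmetric])
       (auto intro!: nn_integral_cong simp: alg_run_def indicator_def)
  also have "\<dots> = ennreal ((expect_step c p ^^ m) ?running (Start 1 0))"
    using p by (intro nn_integral_alg_steps) auto
  finally have "measure (bern_seq p) {\<omega>. \<not> is_halt (alg_run c \<omega> m)} = (expect_step c p ^^ m) ?running (Start 1 0)"
    using p by (simp add: measure_def expect_steps_nonneg)
  moreover have "bounded_off_halt ((expect_step c p ^^ m) ?running) (decay_rate p ^ (m div 3) * 1)"
    using p by (intro expect_steps_decay) (auto simp: bounded_off_halt_def)
  ultimately show ?thesis
    by (simp add: bounded_off_halt_def)
qed

lemma prob_num_inputs_gt: "measure (bern_seq p) {\<omega>. num_inputs c \<omega> > enat n} \<le> decay_rate p ^ (n div 6)"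
proof -
  interpret prob_space "bern_seq p"
    by (rule prob_space_bern_seq)
  have "measure (bern_seq p) {\<omega>. num_inputs c \<omega> > enat n}
      \<le> measure (bern_seq p) {\<omega>. \<not> is_halt (alg_run c \<omega> (n div 2))}"
    using num_inputs_gt_imp_running by (intro finite_measure_mono sets_running) auto
  also have "\<dots> \<le> decay_rate p ^ (n div 6)"
    using prob_running[of c "n div 2"] by (simp add: div_mult2_eq[symmetric])
  finally show ?thesis .
qed

end

section \<open>The coefficients\<close>

definition coef_partial_sum :: "(nat \<Rightarrow> real) \<Rightarrow> nat \<Rightarrow> real" where
  "coef_partial_sum c k = (\<Sum>j<k. c (Suc j))"

lemma dcoef_Suc: "dcoef c (Suc k) = c (Suc k) / (1 - coef_partial_sum c k)"
proof -
  have "(\<Sum>j\<in>{Suc 0..<Suc k}. c j) = (\<Sum>j\<in>{0..<k}. c (Suc j))"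
    by (rule sum.shift_bounds_Suc_ivl)
  then show ?thesis
    by (simp add: dcoef_def coef_partial_sum_def atLeast0LessThan)
qed

context
  fixes c :: "nat \<Rightarrow> real"
  assumes c_nonneg: "\<And>k. k \<ge> 1 \<Longrightarrow> c k \<ge> 0"
    and c_sum: "(\<lambda>k. c (Suc k)) sums 1"
begin

lemma coef_partial_sum_bounds: "0 \<le> coef_partial_sum c k" "coef_partial_sum c k \<le> 1"
  unfolding coef_partial_sum_def
  using c_nonneg sum_le_suminf[OF sums_summable[OF c_sum], of "{..<k}"] sums_unique[OF c_sum]
  by (auto intro: sum_nonneg)

lemma coef_le_remaining_mass: "c (Suc k) \<le> 1 - coef_partial_sum c k"
  using coef_partial_sum_bounds(2)[of "Suc k"] by (simp add: coef_partial_sum_def)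

lemma dcoef_bounds: "0 \<le> dcoef c (Suc k)" "dcoef c (Suc k) \<le> 1"
  using c_nonneg[of "Suc k"] coef_le_remaining_mass[of k]
  by (auto simp: dcoef_Suc divide_le_eq_1)

lemma prod_one_minus_dcoef: "(\<Prod>m<k. 1 - dcoef c (Suc m)) = 1 - coef_partial_sum c k"
proof (induction k)
  case (Suc k)
  have "(1 - coef_partial_sum c k) * (1 - dcoef c (Suc k)) = 1 - coef_partial_sum c (Suc k)"
  proof (cases "coef_partial_sum c k = 1")
    case True
    then show ?thesis
      using c_nonneg[of "Suc k"] coef_le_remaining_mass[of k] by (simp add: coef_partial_sum_def)
  next
    case False
    then show ?thesis
      by (simp add: dcoef_Suc coef_partial_sum_def field_simps)
  qed
  with Suc show ?case
    by simp
qed (simp add: coef_partial_sum_def)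

text \<open>The rounds from the first one on telescope: round k + 1 is reached with probability
  (1 - p)^k (1 - c_1 - \<dots> - c_k).\<close>
lemma expected_rounds_one:
  assumes p: "0 < p" "p < 1"
  shows "p * expected_rounds c p 1 = 1 - (\<Sum>k. c (Suc k) * (1 - p) ^ Suc k)"
proof -
  define R where "R k = 1 - coef_partial_sum c k" for k
  have rounds: "(\<Prod>m<k. pass_prob c p (1 + m)) = (1 - p) ^ k * R k" for k
    using binary_tail_one[OF dcoef_bounds]
    by (simp add: pass_prob_def prod.distrib prod_one_minus_dcoef R_def)
  have R: "0 \<le> R k" "R k \<le> 1" for k
    using coef_partial_sum_bounds[of k] by (auto simp: R_def)
  have summable_rounds: "summable (\<lambda>k. (1 - p) ^ k * R k)"
    by (rule summable_comparison_test[OF _ summable_geometric[of "1 - p"]])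
       (use p R in \<open>auto intro!: mult_left_le simp: abs_mult\<close>)
  have summable_f: "summable (\<lambda>k. c (Suc k) * (1 - p) ^ Suc k)"
  proof (rule summable_comparison_test[OF _ sums_summable[OF c_sum]])
    have "c (Suc k) * (1 - p) ^ Suc k \<le> c (Suc k)" for k
      using p c_nonneg[of "Suc k"] by (intro mult_left_le power_le_one) auto
    then show "\<exists>N. \<forall>n\<ge>N. norm (c (Suc n) * (1 - p) ^ Suc n) \<le> c (Suc n)"
      using p c_nonneg by (auto simp: abs_mult)
  qed
  define X where "X = (\<Sum>k. (1 - p) ^ k * R k)"
  define F where "F = (\<Sum>k. c (Suc k) * (1 - p) ^ Suc k)"
  have "X - 1 = (\<Sum>k. (1 - p) ^ Suc k * R (Suc k))"
    using suminf_split_head[OF summable_rounds] by (simp add: X_def R_def coef_partial_sum_def)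
  also have "\<dots> = (\<Sum>k. (1 - p) * ((1 - p) ^ k * R k) - c (Suc k) * (1 - p) ^ Suc k)"
    by (simp add: R_def coef_partial_sum_def algebra_simps)
  also have "\<dots> = (1 - p) * X - F"
    unfolding X_def F_def
    using suminf_diff[OF summable_mult[OF summable_rounds] summable_f] suminf_mult[OF summable_rounds]
    by simp
  finally have "p * X = 1 - F"
    by (simp add: algebra_simps)
  then show ?thesis
    using rounds by (simp add: expected_rounds_def X_def F_def)
qed

end

theorem theorem5:
  fixes c :: "nat \<Rightarrow> real" and f :: "real \<Rightarrow> real" and p :: real
  assumes c_nonneg: "\<And>k. k \<ge> 1 \<Longrightarrow> c k \<ge> 0"
    and c_sum: "(\<lambda>k. c (Suc k)) sums 1"
    and f_form: "\<And>q. q \<in> {0<..<1} \<Longrightarrow> f q = 1 - (\<Sum>k. c (Suc k) * (1 - q) ^ Suc k)"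
    and f_range: "f ` {0<..<1} \<subseteq> {0<..<1}"
    and p: "0 < p" "p < 1"
  shows "(\<integral>\<^sup>+ \<omega>. ennreal_of_enat (num_inputs c \<omega>) \<partial>bern_seq p)
           = ennreal (f p / p * (1 + 2 / (p * (1 - p))))
         \<and> (\<exists>A \<beta>. A > 0 \<and> 0 < \<beta> \<and> \<beta> < 1 \<and>
           (\<forall>n::nat. measure (bern_seq p) {\<omega>. num_inputs c \<omega> > enat n} \<le> A * \<beta> ^ n))"
proof
  have "p * expected_rounds c p 1 = f p"
    using expected_rounds_one[OF c_nonneg c_sum p] f_form p by simp
  then have "expected_cost c p (Start 1 0) = f p / p * (1 + 2 / (p * (1 - p)))"
    using p by (simp add: expected_cost_def field_simps)
  then show "(\<integral>\<^sup>+ \<omega>. ennreal_of_enat (num_inputs c \<omega>) \<partial>bern_seq p)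
      = ennreal (f p / p * (1 + 2 / (p * (1 - p))))"
    using nn_integral_num_inputs[OF p] by simp
next
  obtain A \<beta> where "A > 0" "0 < \<beta>" "\<beta> < 1" and decay: "\<And>n. decay_rate p ^ (n div 6) \<le> A * \<beta> ^ n"
    using power_div_le_geometric[OF decay_rate_bounds[OF p], of 6] by auto
  moreover have "measure (bern_seq p) {\<omega>. num_inputs c \<omega> > enat n} \<le> A * \<beta> ^ n" for n
    using prob_num_inputs_gt[OF p, where c=c and n=n] decay[of n] by linarith
  ultimately show "\<exists>A \<beta>. A > 0 \<and> 0 < \<beta> \<and> \<beta> < 1 \<and>
      (\<forall>n::nat. measure (bern_seq p) {\<omega>. num_inputs c \<omega> > enat n} \<le> A * \<beta> ^ n)"
    by blast
qed

end
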